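(* Suppose Assumptions (A3) and (A6) hold and $\delta\in\big(0,\frac{1-e^{-\omega}}{2M}\big)$. Let $\alpha_0\in(0,\alpha]$ and $c_2\in(0,\infty)$ be such that $\int e^{\alpha_1D_1(z)}\theta(dz)\le e^{c_2\alpha_1}$ for all $\alpha_1\in[0,\alpha_0]$. Then $\kappa_1:=e^{-\omega}+2\delta M\in(0,1)$, and for all $\alpha_1\in[0,\alpha_0]$, $$\sup_{n\ge0}\int_{\mathbb{R}^d}e^{\alpha_1|x|}\mu_n(dx)\le\Big(\int e^{\alpha_1|x|}\mu_0(dx)\Big)\exp\Big\{\frac{c_2\alpha_1}{1-\kappa_1}\Big\}.$$
   Context: Fix integers $d,m\ge1$, a real $d\times d$ matrix $A$ with operator norm $\|A\|$, $\delta>0$, a Borel probability measure $\theta$ on $\mathbb{R}^m$ and a measurable $f:\mathbb{R}^d\times\mathcal{P}_1(\mathbb{R}^d)\times\mathbb{R}^m\to\mathbb{R}^d$. $\mathcal{P}_1(\mathbb{R}^d)$: Borel probability measures on $\mathbb{R}^d$ with finite first moment, with the Wasserstein-1 distance $\mathcal{W}_1(\mu,\nu)=\inf E|X-Y|$ over couplings. Nonlinear evolution: given $\mu_0\in\mathcal{P}_1(\mathbb{R}^d)$, $\mu_{n+1}=\Psi(\mu_n)$ where $\Psi(\mu)$ is the law of $AX+\delta f(X,\mu,\epsilon)$ with $(X,\epsilon)\sim\mu\otimes\theta$. $D(z):=\sup\frac{|f(x_1,\mu_1,z)-f(x_2,\mu_2,z)|}{|x_1-x_2|+\mathcal{W}_1(\mu_1,\mu_2)}$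 (supremum over $(x_1,\mu_1)\neq(x_2,\mu_2)$), $D_1(z):=|f(0,\delta_0,z)|$. (A3): $\|A\|\le e^{-\omega}$ for some $\omega>0$. (A6): (i) for some $M\in(1,\infty)$, $D(z)\le M$ for $\theta$-a.e. $z$; (ii) there is $\alpha>0$ with $\int e^{\alpha|x|}\mu_0(dx)<\infty$ and $\int e^{\alpha D_1(z)}\theta(dz)<\infty$. *)

theory Defs
  imports "HOL-Probability.Probability"
begin

definition P1 :: "(real^'n) measure \<Rightarrow> bool" where
  "P1 \<mu> \<longleftrightarrow> prob_space \<mu> \<and> sets \<mu> = sets borel \<and> integrable \<mu> (\<lambda>x. norm x)"

definition coupling :: "(real^'n) measure \<Rightarrow> (real^'n) measure \<Rightarrow> ((real^'n) \<times> (real^'n)) measure \<Rightarrow> bool" where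
  "coupling \<mu> \<nu> \<pi> \<longleftrightarrow> prob_space \<pi> \<and> sets \<pi> = sets (borel \<Otimes>\<^sub>M borel)
     \<and> distr \<pi> borel fst = \<mu> \<and> distr \<pi> borel snd = \<nu>"

definition W1 :: "(real^'n) measure \<Rightarrow> (real^'n) measure \<Rightarrow> real" where
  "W1 \<mu> \<nu> = Inf {(\<integral>p. norm (fst p - snd p) \<partial>\<pi>) | \<pi>. coupling \<mu> \<nu> \<pi>}"

definition Psi :: "real^'n^'n \<Rightarrow> real \<Rightarrow> (real^'n \<Rightarrow> (real^'n) measure \<Rightarrow> real^'m \<Rightarrow> real^'n)
     \<Rightarrow> (real^'m) measure \<Rightarrow> (real^'n) measure \<Rightarrow> (real^'n) measure" where
  "Psi A \<delta> f \<theta> \<mu> = distr (\<mu> \<Otimes>\<^sub>M \<theta>) borel (\<lambda>(x, z). A *v x + \<delta> *\<^sub>R f x \<mu> z)"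

definition Dlip :: "(real^'n \<Rightarrow> (real^'n) measure \<Rightarrow> real^'m \<Rightarrow> real^'n) \<Rightarrow> real^'m \<Rightarrow> ereal" where
  "Dlip f z = (SUP p \<in> {((x1, \<mu>1), (x2, \<mu>2)). P1 \<mu>1 \<and> P1 \<mu>2 \<and> (x1, \<mu>1) \<noteq> (x2, \<mu>2)}.
      (case p of ((x1, \<mu>1), (x2, \<mu>2)) \<Rightarrow>
        ereal (norm (f x1 \<mu>1 z - f x2 \<mu>2 z) / (norm (x1 - x2) + W1 \<mu>1 \<mu>2))))"

definition D1 :: "(real^'n \<Rightarrow> (real^'n) measure \<Rightarrow> real^'m \<Rightarrow> real^'n) \<Rightarrow> real^'m \<Rightarrow> real" where
  "D1 f z = norm (f 0 (return borel 0) z)"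

end

theory Submission
  imports Defs
begin

text \<open>
  The Lipschitz bound on \<open>f\<close>, with \<open>W\<^sub>1(\<mu>, \<delta>\<^sub>0) \<le> \<integral>|y| d\<mu>\<close>, gives
  \<open>|A x + \<delta> f(x,\<mu>,z)| \<le> \<kappa>|x| + \<delta>M \<integral>|y| d\<mu> + \<delta> D\<^sub>1(z)\<close> with \<open>\<kappa> = e\<^sup>-\<^sup>\<omega> + \<delta>M \<le> 1\<close>.
  Exponentiating and integrating, concavity of \<open>t \<mapsto> t ^ \<kappa>\<close> bounds the first term by \<open>\<ell> ^ \<kappa>\<close>, and
  Jensen's inequality \<open>exp(\<alpha> \<integral>|y| d\<mu>) \<le> \<ell>\<close> bounds the mean-field term by \<open>\<ell> ^ (\<delta>M)\<close>, where
  \<open>\<ell> = \<integral>exp(\<alpha>|y|) d\<mu>\<close>. So the exponential moments \<open>\<ell>\<^sub>n\<close> of \<open>\<mu>\<^sub>n\<close> obey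
  \<open>\<ell>\<^sub>n\<^sub>+\<^sub>1 \<le> \<ell>\<^sub>n ^ \<kappa>\<^sub>1 \<cdot> exp(c\<^sub>2\<alpha>\<delta>)\<close> with \<open>\<kappa>\<^sub>1 = e\<^sup>-\<^sup>\<omega> + 2\<delta>M < 1\<close>. As \<open>\<ell>\<^sub>0 \<ge> 1\<close> and
  \<open>C = exp(c\<^sub>2\<alpha>\<delta>/(1-\<kappa>\<^sub>1))\<close> is the fixed point of \<open>y \<mapsto> y ^ \<kappa>\<^sub>1 \<cdot> exp(c\<^sub>2\<alpha>\<delta>)\<close>, induction
  gives \<open>\<ell>\<^sub>n \<le> \<ell>\<^sub>0 C\<close>.
\<close>

section \<open>Couplings and the Wasserstein distance\<close>

lemma coupling_pair_measure:
  fixes \<mu> \<nu> :: "(real^'n) measure"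
  assumes p: "prob_space \<mu>" "prob_space \<nu>" and s: "sets \<mu> = sets borel" "sets \<nu> = sets borel"
  shows "coupling \<mu> \<nu> (\<mu> \<Otimes>\<^sub>M \<nu>)"
proof -
  interpret pair_prob_space \<mu> \<nu>
    using p by (simp add: pair_prob_space_def pair_sigma_finite_def prob_space_imp_sigma_finite)
  have "distr (\<mu> \<Otimes>\<^sub>M \<nu>) borel fst = distr (\<mu> \<Otimes>\<^sub>M \<nu>) \<mu> fst"
    by (rule distr_cong) (auto simp: s)
  also have "\<dots> = \<mu>" using prob_space.distr_pair_fst[OF p(2)] .
  finally have fst: "distr (\<mu> \<Otimes>\<^sub>M \<nu>) borel fst = \<mu>" .
  have "distr (\<mu> \<Otimes>\<^sub>M \<nu>) borel snd = distr (\<mu> \<Otimes>\<^sub>M \<nu>) \<nu> snd"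
    by (rule distr_cong) (auto simp: s)
  also have "\<dots> = \<nu>"
  proof (intro measure_eqI)
    fix A assume A: "A \<in> sets (distr (\<mu> \<Otimes>\<^sub>M \<nu>) \<nu> snd)"
    then have "emeasure (distr (\<mu> \<Otimes>\<^sub>M \<nu>) \<nu> snd) A = emeasure (\<mu> \<Otimes>\<^sub>M \<nu>) (space \<mu> \<times> A)"
      by (auto simp: emeasure_distr space_pair_measure dest: sets.sets_into_space
          intro!: arg_cong2[where f=emeasure])
    with A show "emeasure (distr (\<mu> \<Otimes>\<^sub>M \<nu>) \<nu> snd) A = emeasure \<nu> A"
      using M2.emeasure_pair_measure_Times[OF sets.top[of \<mu>], of A] by (simp add: M1.emeasure_space_1)
  qed simp
  finally have snd: "distr (\<mu> \<Otimes>\<^sub>M \<nu>) borel snd = \<nu>" .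
  show ?thesis
    unfolding coupling_def using fst snd prob_space_pair[OF p] sets_pair_measure_cong[OF s] by simp
qed

lemma coupling_diagonal:
  fixes \<mu> :: "(real^'n) measure"
  assumes p: "prob_space \<mu>" and s: "sets \<mu> = sets borel"
  shows "coupling \<mu> \<mu> (distr \<mu> (borel \<Otimes>\<^sub>M borel) (\<lambda>x. (x, x)))"
proof -
  have diag[measurable]: "(\<lambda>x. (x, x)) \<in> \<mu> \<rightarrow>\<^sub>M borel \<Otimes>\<^sub>M borel"
    by (subst measurable_cong_sets[OF s refl]) measurable
  have marginal: "distr (distr \<mu> (borel \<Otimes>\<^sub>M borel) (\<lambda>x. (x, x))) borel g = \<mu>"
    if "g \<in> borel \<Otimes>\<^sub>M borel \<rightarrow>\<^sub>M borel" "\<And>x. g (x, x) = x" for g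
  proof -
    have "distr (distr \<mu> (borel \<Otimes>\<^sub>M borel) (\<lambda>x. (x, x))) borel g = distr \<mu> borel (\<lambda>x. x)"
      by (subst distr_distr[OF that(1) diag]) (simp add: comp_def that(2))
    also have "\<dots> = \<mu>" by (rule distr_id2[OF s[symmetric]])
    finally show ?thesis .
  qed
  show ?thesis
    unfolding coupling_def using prob_space.prob_space_distr[OF p diag] marginal[of fst] marginal[of snd]
    by simp
qed

lemma W1_le_coupling_integral:
  fixes \<mu> \<nu> :: "(real^'n) measure"
  assumes "coupling \<mu> \<nu> \<pi>"
  shows "W1 \<mu> \<nu> \<le> (\<integral>p. norm (fst p - snd p) \<partial>\<pi>)"
  unfolding W1_def
proof (rule cInf_lower)
  show "bdd_below {(\<integral>p. norm (fst p - snd p) \<partial>\<pi>) | \<pi>. coupling \<mu> \<nu> \<pi>}"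
    by (rule bdd_belowI[of _ 0]) auto
qed (use assms in blast)

lemma W1_nonneg:
  fixes \<mu> \<nu> :: "(real^'n) measure"
  assumes "P1 \<mu>" "P1 \<nu>"
  shows "0 \<le> W1 \<mu> \<nu>"
  unfolding W1_def
proof (rule cInf_greatest)
  show "{(\<integral>p. norm (fst p - snd p) \<partial>\<pi>) | \<pi>. coupling \<mu> \<nu> \<pi>} \<noteq> {}"
    using coupling_pair_measure[of \<mu> \<nu>] assms unfolding P1_def by blast
qed auto

lemma W1_self:
  fixes \<mu> :: "(real^'n) measure"
  assumes "P1 \<mu>"
  shows "W1 \<mu> \<mu> = 0"
proof -
  have s: "sets \<mu> = sets borel" and p: "prob_space \<mu>" using assms by (auto simp: P1_def)
  have [measurable]: "(\<lambda>x. (x, x)) \<in> \<mu> \<rightarrow>\<^sub>M borel \<Otimes>\<^sub>M borel"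
    by (subst measurable_cong_sets[OF s refl]) simp
  have "W1 \<mu> \<mu> \<le> (\<integral>p. norm (fst p - snd p) \<partial>distr \<mu> (borel \<Otimes>\<^sub>M borel) (\<lambda>x. (x, x)))"
    by (rule W1_le_coupling_integral[OF coupling_diagonal[OF p s]])
  also have "\<dots> = 0" by (subst integral_distr) auto
  finally show ?thesis using W1_nonneg[OF assms assms] by simp
qed

lemma W1_le_first_moments:
  fixes \<mu> \<nu> :: "(real^'n) measure"
  assumes "P1 \<mu>" "P1 \<nu>"
  shows "W1 \<mu> \<nu> \<le> (\<integral>x. norm x \<partial>\<mu>) + (\<integral>x. norm x \<partial>\<nu>)"
proof -
  have p: "prob_space \<mu>" "prob_space \<nu>" and s: "sets \<mu> = sets borel" "sets \<nu> = sets borel"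
    and i: "integrable \<mu> (\<lambda>x. norm x)" "integrable \<nu> (\<lambda>x. norm x)"
    using assms by (auto simp: P1_def)
  interpret pair_prob_space \<mu> \<nu>
    using p by (simp add: pair_prob_space_def pair_sigma_finite_def prob_space_imp_sigma_finite)
  have [measurable]: "(\<lambda>x::real^'n. norm x) \<in> borel_measurable \<mu>" "(\<lambda>x::real^'n. norm x) \<in> borel_measurable \<nu>"
    by (subst measurable_cong_sets[OF s(1) refl], simp) (subst measurable_cong_sets[OF s(2) refl], simp)
  have "(\<integral>\<^sup>+p. ennreal (norm (fst p - snd p)) \<partial>(\<mu> \<Otimes>\<^sub>M \<nu>))
      \<le> (\<integral>\<^sup>+p. ennreal (norm (fst p)) + ennreal (norm (snd p)) \<partial>(\<mu> \<Otimes>\<^sub>M \<nu>))"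
    by (intro nn_integral_mono) (metis ennreal_leI ennreal_plus norm_ge_zero norm_triangle_ineq4)
  also have "\<dots> = (\<integral>\<^sup>+p. ennreal (norm (fst p)) \<partial>(\<mu> \<Otimes>\<^sub>M \<nu>)) + (\<integral>\<^sup>+p. ennreal (norm (snd p)) \<partial>(\<mu> \<Otimes>\<^sub>M \<nu>))"
    by (intro nn_integral_add) auto
  also have "(\<integral>\<^sup>+p. ennreal (norm (fst p)) \<partial>(\<mu> \<Otimes>\<^sub>M \<nu>)) = ennreal (\<integral>x. norm x \<partial>\<mu>)"
    by (subst M2.nn_integral_fst[symmetric])
      (auto simp: M2.emeasure_space_1 intro!: nn_integral_eq_integral[OF i(1)])
  also have "(\<integral>\<^sup>+p. ennreal (norm (snd p)) \<partial>(\<mu> \<Otimes>\<^sub>M \<nu>)) = ennreal (\<integral>x. norm x \<partial>\<nu>)"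
    by (subst M2.nn_integral_fst[symmetric])
      (auto simp: M1.emeasure_space_1 intro!: nn_integral_eq_integral[OF i(2)])
  finally have "(\<integral>p. norm (fst p - snd p) \<partial>(\<mu> \<Otimes>\<^sub>M \<nu>)) \<le> (\<integral>x. norm x \<partial>\<mu>) + (\<integral>x. norm x \<partial>\<nu>)"
    by (intro integral_real_bounded) (auto simp: ennreal_plus)
  then show ?thesis
    using W1_le_coupling_integral[OF coupling_pair_measure[OF p s]] by linarith
qed

lemma P1_return_0: "P1 (return borel (0::real^'n))"
  unfolding P1_def by (auto intro!: prob_space_return integrableI_bounded simp: nn_integral_return)

section \<open>The Lipschitz bound on the drift\<close>

lemma Dlip_le_imp_Lipschitz_distinct:
  fixes f :: "real^'n \<Rightarrow> (real^'n) measure \<Rightarrow> real^'m \<Rightarrow> real^'n"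
  assumes D: "Dlip f z \<le> ereal M" and "P1 \<mu>1" "P1 \<mu>2" "x1 \<noteq> x2"
  shows "norm (f x1 \<mu>1 z - f x2 \<mu>2 z) \<le> M * (norm (x1 - x2) + W1 \<mu>1 \<mu>2)"
proof -
  have pos: "0 < norm (x1 - x2) + W1 \<mu>1 \<mu>2"
    using assms W1_nonneg[of \<mu>1 \<mu>2] by (simp add: add_pos_nonneg)
  have "ereal (norm (f x1 \<mu>1 z - f x2 \<mu>2 z) / (norm (x1 - x2) + W1 \<mu>1 \<mu>2)) \<le> Dlip f z"
    unfolding Dlip_def by (rule SUP_upper2[of "((x1, \<mu>1), (x2, \<mu>2))"]) (use assms in auto)
  from order.trans[OF this D]
  have "norm (f x1 \<mu>1 z - f x2 \<mu>2 z) / (norm (x1 - x2) + W1 \<mu>1 \<mu>2) \<le> M" by simp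
  with pos show ?thesis by (simp add: divide_le_eq mult.commute)
qed

lemma Dlip_le_imp_Lipschitz:
  fixes f :: "real^'n \<Rightarrow> (real^'n) measure \<Rightarrow> real^'m \<Rightarrow> real^'n"
  assumes D: "Dlip f z \<le> ereal M" and M: "0 \<le> M" and \<mu>1: "P1 \<mu>1" and \<mu>2: "P1 \<mu>2"
  shows "norm (f x1 \<mu>1 z - f x2 \<mu>2 z) \<le> M * (norm (x1 - x2) + W1 \<mu>1 \<mu>2)"
proof (cases "x1 = x2")
  case False
  then show ?thesis by (rule Dlip_le_imp_Lipschitz_distinct[OF D \<mu>1 \<mu>2])
next
  case True
  \<comment> \<open>The quotient in the supremum may have denominator 0 here, so compare both
    points with a nearby point \<open>(x1 + v, \<mu>2)\<close> instead.\<close>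
  have "norm (f x1 \<mu>1 z - f x1 \<mu>2 z) \<le> M * W1 \<mu>1 \<mu>2 + e" if e: "0 < e" for e
  proof -
    obtain v :: "real^'n" where v: "norm v = e / (2 * M + 1)"
      using vector_choose_size[of "e / (2 * M + 1)"] e M by auto
    have "v \<noteq> 0" using v e M by auto
    have "norm (f x1 \<mu>1 z - f x1 \<mu>2 z)
        \<le> norm (f x1 \<mu>1 z - f (x1 + v) \<mu>2 z) + norm (f (x1 + v) \<mu>2 z - f x1 \<mu>2 z)"
      using norm_triangle_ineq[of "f x1 \<mu>1 z - f (x1 + v) \<mu>2 z" "f (x1 + v) \<mu>2 z - f x1 \<mu>2 z"]
      by simp
    also have "\<dots> \<le> M * (norm v + W1 \<mu>1 \<mu>2) + M * norm v"
      using Dlip_le_imp_Lipschitz_distinct[OF D \<mu>1 \<mu>2, of x1 "x1 + v"]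
        Dlip_le_imp_Lipschitz_distinct[OF D \<mu>2 \<mu>2, of "x1 + v" x1] W1_self[OF \<mu>2] \<open>v \<noteq> 0\<close>
      by (auto intro!: add_mono)
    also have "\<dots> = M * W1 \<mu>1 \<mu>2 + (2 * M) * (e / (2 * M + 1))"
      by (simp add: v algebra_simps)
    also have "(2 * M) * (e / (2 * M + 1)) \<le> e"
      using e M by (simp add: field_simps)
    finally show ?thesis by simp
  qed
  then show ?thesis using True by (simp add: field_le_epsilon)
qed

lemma norm_f_le_D1:
  fixes f :: "real^'n \<Rightarrow> (real^'n) measure \<Rightarrow> real^'m \<Rightarrow> real^'n"
  assumes "Dlip f z \<le> ereal M" "0 \<le> M" "P1 \<mu>"
  shows "norm (f x \<mu> z) \<le> D1 f z + M * (norm x + (\<integral>y. norm y \<partial>\<mu>))"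
proof -
  have "norm (f x \<mu> z - f 0 (return borel 0) z) \<le> M * (norm x + W1 \<mu> (return borel 0))"
    using Dlip_le_imp_Lipschitz[OF assms P1_return_0, of x 0] by simp
  also have "\<dots> \<le> M * (norm x + (\<integral>y. norm y \<partial>\<mu>))"
    using W1_le_first_moments[OF assms(3) P1_return_0] assms(2)
    by (intro mult_left_mono) (auto simp: integral_return)
  finally show ?thesis
    unfolding D1_def using norm_triangle_sub[of "f x \<mu> z" "f 0 (return borel 0) z"] by linarith
qed

section \<open>Exponential moments\<close>

definition exp_moment :: "real \<Rightarrow> 'a::real_normed_vector measure \<Rightarrow> ennreal" where
  "exp_moment a \<mu> = (\<integral>\<^sup>+x. ennreal (exp (a * norm x)) \<partial>\<mu>)"

lemma exp_moment_mono:
  assumes "a \<le> b"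
  shows "exp_moment a \<mu> \<le> exp_moment b \<mu>"
  unfolding exp_moment_def using assms
  by (intro nn_integral_mono ennreal_leI) (simp add: mult_right_mono)

lemma
  fixes \<mu> :: "'a::real_normed_vector measure"
  assumes s: "sets \<mu> = sets borel" and fin: "exp_moment a \<mu> < \<infinity>"
  shows integrable_exp_norm: "integrable \<mu> (\<lambda>x. exp (a * norm x))"
    and exp_moment_eq_integral: "exp_moment a \<mu> = ennreal (\<integral>x. exp (a * norm x) \<partial>\<mu>)"
proof -
  have [measurable]: "(\<lambda>x. norm x) \<in> borel_measurable \<mu>"
    by (subst measurable_cong_sets[OF s refl]) simp
  show i: "integrable \<mu> (\<lambda>x. exp (a * norm x))"
    by (rule integrableI_bounded) (use fin in \<open>simp_all add: exp_moment_def\<close>)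
  show "exp_moment a \<mu> = ennreal (\<integral>x. exp (a * norm x) \<partial>\<mu>)"
    unfolding exp_moment_def by (rule nn_integral_eq_integral[OF i]) auto
qed

lemma one_le_integral_exp_norm:
  fixes \<mu> :: "'a::real_normed_vector measure"
  assumes "prob_space \<mu>" "sets \<mu> = sets borel" "exp_moment a \<mu> < \<infinity>" "0 \<le> a"
  shows "1 \<le> (\<integral>x. exp (a * norm x) \<partial>\<mu>)"
proof -
  interpret prob_space \<mu> by fact
  have "(\<integral>x. 1 \<partial>\<mu>) \<le> (\<integral>x. exp (a * norm x) \<partial>\<mu>)"
    using assms by (intro integral_mono integrable_exp_norm) auto
  then show ?thesis by (simp add: prob_space)
qed

lemma P1_if_exp_moment_finite:
  fixes \<mu> :: "(real^'n) measure"
  assumes p: "prob_space \<mu>" and s: "sets \<mu> = sets borel" and a: "0 < a"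
    and fin: "exp_moment a \<mu> < \<infinity>"
  shows "P1 \<mu>"
proof -
  have "integrable \<mu> (\<lambda>x. (1 / a) * exp (a * norm x))"
    using integrable_exp_norm[OF s fin] by simp
  moreover have "norm (norm x) \<le> norm ((1 / a) * exp (a * norm x))" for x :: "real^'n"
  proof -
    have "a * norm x \<le> exp (a * norm x)" using exp_ge_add_one_self[of "a * norm x"] by linarith
    then show ?thesis using a by (simp add: field_simps)
  qed
  moreover have "(\<lambda>x. norm x) \<in> borel_measurable \<mu>"
    by (subst measurable_cong_sets[OF s refl]) simp
  ultimately have "integrable \<mu> (\<lambda>x. norm x)"
    by (blast intro: Bochner_Integration.integrable_bound AE_I2)
  then show ?thesis using p s by (simp add: P1_def)
qed

lemma powr_concave:
  assumes "0 \<le> p" "p \<le> 1"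
  shows "concave_on {0<..} (\<lambda>x::real. x powr p)"
proof (rule f''_le0_imp_concave[where f' = "\<lambda>x. p * x powr (p - 1)"
      and f'' = "\<lambda>x. p * ((p - 1) * x powr (p - 1 - 1))"])
  fix x :: real assume x: "x \<in> {0<..}"
  then show "((\<lambda>x. x powr p) has_real_derivative p * x powr (p - 1)) (at x)"
    by (simp add: has_real_derivative_powr)
  show "((\<lambda>x. p * x powr (p - 1)) has_real_derivative p * ((p - 1) * x powr (p - 1 - 1))) (at x)"
    using x by (intro DERIV_cmult has_real_derivative_powr) simp
  show "p * ((p - 1) * x powr (p - 1 - 1)) \<le> 0"
    using assms by (intro mult_nonneg_nonpos mult_nonpos_nonneg) auto
qed simp

lemma (in prob_space)
  fixes g :: "'a \<Rightarrow> real"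
  assumes g: "integrable M g" and pos: "\<And>x. x \<in> space M \<Longrightarrow> 0 < g x" and p: "0 \<le> p" "p \<le> 1"
  shows integrable_powr: "integrable M (\<lambda>x. g x powr p)"
    and integral_powr_le: "(\<integral>x. g x powr p \<partial>M) \<le> (\<integral>x. g x \<partial>M) powr p"
proof -
  have bound: "norm (g x powr p) \<le> norm (1 + g x)" if "x \<in> space M" for x
  proof (cases "g x \<le> 1")
    case True
    then have "g x powr p \<le> 1" using pos[OF that] p by (intro powr_le1) auto
    then show ?thesis using pos[OF that] by simp
  next
    case False
    then have "g x powr p \<le> g x powr 1" using p by (intro powr_mono) auto
    then show ?thesis using False by simp
  qed
  have [measurable]: "g \<in> borel_measurable M" using g by blast
  show int: "integrable M (\<lambda>x. g x powr p)"
    by (rule Bochner_Integration.integrable_bound[of _ "\<lambda>x. 1 + g x"])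
      (use g bound in \<open>auto intro!: AE_I2\<close>)
  have "- ((\<integral>x. g x \<partial>M) powr p) \<le> (\<integral>x. - (g x powr p) \<partial>M)"
  proof (rule jensens_inequality[where I = "{0<..}" and a = 0])
    show "convex_on {0<..} (\<lambda>x. - (x powr p))"
      using powr_concave[OF p] by (simp add: concave_on_def)
    show "AE x in M. g x \<in> {0<..}" using pos by (auto intro!: AE_I2)
  qed (use g int in auto)
  then show "(\<integral>x. g x powr p \<partial>M) \<le> (\<integral>x. g x \<partial>M) powr p" by simp
qed

lemma powr_recurrence_bound:
  fixes l :: "nat \<Rightarrow> real"
  assumes step: "\<And>n. l (Suc n) \<le> l n powr k * exp b" and nonneg: "\<And>n. 0 \<le> l n"
    and l0: "1 \<le> l 0" and k: "0 \<le> k" "k < 1" and b: "0 \<le> b"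
  shows "l n \<le> l 0 * exp (b / (1 - k))"
proof (induction n)
  case 0
  have "1 \<le> exp (b / (1 - k))" using b k by simp
  then show ?case using l0 by (simp add: mult_le_cancel_left1)
next
  case (Suc n)
  define C where "C = exp (b / (1 - k))"
  have fixed: "C powr k * exp b = C"
  proof -
    have "k * (b / (1 - k)) + b = b / (1 - k)" using k by (simp add: field_simps)
    then show ?thesis by (simp add: C_def exp_powr_real mult.commute flip: exp_add)
  qed
  have "l (Suc n) \<le> l n powr k * exp b" by (rule step)
  also have "\<dots> \<le> (l 0 * C) powr k * exp b"
    using Suc nonneg[of n] k by (simp add: C_def powr_mono2)
  also have "\<dots> = l 0 powr k * (C powr k * exp b)" by (simp add: powr_mult)
  also have "\<dots> \<le> l 0 * C"
    using powr_mono[of k 1 "l 0"] l0 k fixed by (simp add: C_def)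
  finally show ?case by (simp add: C_def)
qed

section \<open>One step of the evolution\<close>

locale nonlinear_evolution =
  fixes A :: "real^'n^'n" and \<delta> \<omega> M :: real and \<theta> :: "(real^'m) measure"
    and f :: "real^'n \<Rightarrow> (real^'n) measure \<Rightarrow> real^'m \<Rightarrow> real^'n"
  assumes prob_space_\<theta>: "prob_space \<theta>" and sets_\<theta>: "sets \<theta> = sets borel"
    and f_measurable: "\<And>\<mu>. P1 \<mu> \<Longrightarrow> (\<lambda>(x, z). f x \<mu> z) \<in> borel_measurable (borel \<Otimes>\<^sub>M borel)"
    and onorm_A: "onorm ((*v) A) \<le> exp (- \<omega>)"
    and Dlip_le: "AE z in \<theta>. Dlip f z \<le> ereal M"
    and M_nonneg: "0 \<le> M" and \<delta>_nonneg: "0 \<le> \<delta>"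
    and contraction: "exp (- \<omega>) + \<delta> * M \<le> 1"
begin

abbreviation step :: "(real^'n) measure \<Rightarrow> (real^'n) measure" where
  "step \<equiv> Psi A \<delta> f \<theta>"

lemma measurable_update:
  assumes "P1 \<mu>"
  shows "(\<lambda>(x, z). A *v x + \<delta> *\<^sub>R f x \<mu> z) \<in> borel_measurable (\<mu> \<Otimes>\<^sub>M \<theta>)"
proof -
  have "sets (\<mu> \<Otimes>\<^sub>M \<theta>) = sets (borel \<Otimes>\<^sub>M borel)"
    using assms sets_\<theta> by (intro sets_pair_measure_cong) (auto simp: P1_def)
  note cong = measurable_cong_sets[OF this refl]
  have [measurable]: "(\<lambda>(x, z). f x \<mu> z) \<in> borel_measurable (\<mu> \<Otimes>\<^sub>M \<theta>)"
    unfolding cong by (rule f_measurable[OF assms])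
  have [measurable]: "fst \<in> \<mu> \<Otimes>\<^sub>M \<theta> \<rightarrow>\<^sub>M borel"
    unfolding cong by simp
  have [measurable]: "(\<lambda>x. A *v x) \<in> borel_measurable borel"
    by (intro borel_measurable_continuous_onI linear_continuous_on) simp
  have "(\<lambda>p. A *v fst p + \<delta> *\<^sub>R (\<lambda>(x, z). f x \<mu> z) p) \<in> borel_measurable (\<mu> \<Otimes>\<^sub>M \<theta>)"
    by measurable
  then show ?thesis by (simp add: case_prod_beta')
qed

lemma prob_space_step: "P1 \<mu> \<Longrightarrow> prob_space (step \<mu>)"
  unfolding Psi_def using prob_space_\<theta>
  by (intro prob_space.prob_space_distr measurable_update prob_space_pair) (auto simp: P1_def)

lemma sets_step: "sets (step \<mu>) = sets borel"
  by (simp add: Psi_def)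

lemma measurable_D1: "(\<lambda>z. D1 f z) \<in> borel_measurable \<theta>"
proof -
  have "(\<lambda>z. (0::real^'n, z)) \<in> \<theta> \<rightarrow>\<^sub>M borel \<Otimes>\<^sub>M borel"
    by (intro measurable_Pair measurable_const) (auto intro: measurable_ident_sets[OF sets_\<theta>])
  from measurable_compose[OF this f_measurable[OF P1_return_0]] show ?thesis
    by (simp add: D1_def)
qed

lemma norm_update_le:
  assumes "P1 \<mu>"
  shows "AE z in \<theta>. norm (A *v x + \<delta> *\<^sub>R f x \<mu> z)
    \<le> (exp (- \<omega>) + \<delta> * M) * norm x + \<delta> * M * (\<integral>y. norm y \<partial>\<mu>) + \<delta> * D1 f z"
  using Dlip_le
proof eventually_elim
  case (elim z)
  have "norm (A *v x) \<le> exp (- \<omega>) * norm x"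
    using onorm[OF matrix_vector_mul_bounded_linear[of A], of x] onorm_A
    by (meson mult_right_mono norm_ge_zero order_trans)
  moreover have "norm (f x \<mu> z) \<le> D1 f z + M * (norm x + (\<integral>y. norm y \<partial>\<mu>))"
    by (rule norm_f_le_D1[OF elim M_nonneg assms])
  ultimately have "norm (A *v x) + \<delta> * norm (f x \<mu> z)
      \<le> exp (- \<omega>) * norm x + \<delta> * (D1 f z + M * (norm x + (\<integral>y. norm y \<partial>\<mu>)))"
    using \<delta>_nonneg by (intro add_mono mult_left_mono) auto
  then show ?case
    using norm_triangle_ineq[of "A *v x" "\<delta> *\<^sub>R f x \<mu> z"] \<delta>_nonneg by (simp add: algebra_simps)
qed

lemma nn_integral_exp_update_le:
  assumes \<mu>: "P1 \<mu>" and a: "0 \<le> a"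
  shows "(\<integral>\<^sup>+z. ennreal (exp (a * norm (A *v x + \<delta> *\<^sub>R f x \<mu> z))) \<partial>\<theta>)
    \<le> ennreal (exp (a * norm x) powr (exp (- \<omega>) + \<delta> * M) * exp (a * \<delta> * M * (\<integral>y. norm y \<partial>\<mu>)))
       * (\<integral>\<^sup>+z. ennreal (exp (a * \<delta> * D1 f z)) \<partial>\<theta>)"
proof -
  define \<kappa> where "\<kappa> = exp (- \<omega>) + \<delta> * M"
  define m where "m = (\<integral>y. norm y \<partial>\<mu>)"
  have [measurable]: "(\<lambda>z. D1 f z) \<in> borel_measurable \<theta>" by (rule measurable_D1)
  have "(\<integral>\<^sup>+z. ennreal (exp (a * norm (A *v x + \<delta> *\<^sub>R f x \<mu> z))) \<partial>\<theta>)
      \<le> (\<integral>\<^sup>+z. ennreal (exp (a * norm x) powr \<kappa> * exp (a * \<delta> * M * m)) * ennreal (exp (a * \<delta> * D1 f z)) \<partial>\<theta>)"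
    using norm_update_le[OF \<mu>, of x]
  proof (intro nn_integral_mono_AE, eventually_elim)
    case (elim z)
    then have "exp (a * norm (A *v x + \<delta> *\<^sub>R f x \<mu> z))
        \<le> exp (a * (\<kappa> * norm x + \<delta> * M * m + \<delta> * D1 f z))"
      using a by (simp add: \<kappa>_def m_def mult_left_mono)
    also have "\<dots> = exp (a * norm x) powr \<kappa> * exp (a * \<delta> * M * m) * exp (a * \<delta> * D1 f z)"
      by (simp add: exp_powr_real algebra_simps flip: exp_add)
    finally show ?case by (simp add: ennreal_leI flip: ennreal_mult)
  qed
  also have "\<dots> = ennreal (exp (a * norm x) powr \<kappa> * exp (a * \<delta> * M * m))
      * (\<integral>\<^sup>+z. ennreal (exp (a * \<delta> * D1 f z)) \<partial>\<theta>)"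
    by (rule nn_integral_cmult) measurable
  finally show ?thesis unfolding \<kappa>_def m_def .
qed

lemma exp_moment_step_le:
  assumes \<mu>: "P1 \<mu>" and a: "0 \<le> a" and fin: "exp_moment a \<mu> < \<infinity>"
  shows "exp_moment a (step \<mu>)
    \<le> ennreal ((\<integral>x. exp (a * norm x) \<partial>\<mu>) powr (exp (- \<omega>) + 2 * \<delta> * M))
       * (\<integral>\<^sup>+z. ennreal (exp (a * \<delta> * D1 f z)) \<partial>\<theta>)"
proof -
  interpret \<theta>: prob_space \<theta> by (rule prob_space_\<theta>)
  have p: "prob_space \<mu>" and s: "sets \<mu> = sets borel" and int_norm: "integrable \<mu> (\<lambda>x. norm x)"
    using \<mu> by (auto simp: P1_def)
  interpret \<mu>: prob_space \<mu> by (rule p)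
  define \<kappa> where "\<kappa> = exp (- \<omega>) + \<delta> * M"
  define L where "L = (\<integral>x. exp (a * norm x) \<partial>\<mu>)"
  define E where "E = exp (a * \<delta> * M * (\<integral>y. norm y \<partial>\<mu>))"
  define \<Theta> where "\<Theta> = (\<integral>\<^sup>+z. ennreal (exp (a * \<delta> * D1 f z)) \<partial>\<theta>)"
  have \<kappa>: "0 \<le> \<kappa>" "\<kappa> \<le> 1"
    using contraction M_nonneg \<delta>_nonneg by (auto simp: \<kappa>_def)
  have [measurable]: "(\<lambda>x. norm x) \<in> borel_measurable \<mu>"
    by (subst measurable_cong_sets[OF s refl]) simp
  note [measurable] = measurable_update[OF \<mu>]
  have int_exp: "integrable \<mu> (\<lambda>x. exp (a * norm x))" by (rule integrable_exp_norm[OF s fin])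
  have int_powr: "integrable \<mu> (\<lambda>x. exp (a * norm x) powr \<kappa>)"
    and le_powr: "(\<integral>x. exp (a * norm x) powr \<kappa> \<partial>\<mu>) \<le> L powr \<kappa>"
    using \<mu>.integrable_powr[OF int_exp _ \<kappa>] \<mu>.integral_powr_le[OF int_exp _ \<kappa>] by (auto simp: L_def)
  have jensen: "exp (a * (\<integral>y. norm y \<partial>\<mu>)) \<le> L"
    unfolding L_def
    using \<mu>.jensens_inequality[of "\<lambda>x. a * norm x" UNIV 0 0 exp] exp_convex int_norm int_exp by simp
  have E_le: "E \<le> L powr (\<delta> * M)"
  proof -
    have "E = exp (a * (\<integral>y. norm y \<partial>\<mu>)) powr (\<delta> * M)"
      by (simp add: E_def exp_powr_real algebra_simps)
    with jensen show ?thesis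
      using M_nonneg \<delta>_nonneg by (simp add: powr_mono2)
  qed
  have "exp_moment a (step \<mu>)
      = (\<integral>\<^sup>+x. \<integral>\<^sup>+z. ennreal (exp (a * norm (A *v x + \<delta> *\<^sub>R f x \<mu> z))) \<partial>\<theta> \<partial>\<mu>)"
    unfolding exp_moment_def Psi_def
    by (subst nn_integral_distr) (simp_all add: \<theta>.nn_integral_fst[symmetric] case_prod_beta')
  also have "\<dots> \<le> (\<integral>\<^sup>+x. ennreal (exp (a * norm x) powr \<kappa> * E) * \<Theta> \<partial>\<mu>)"
    unfolding \<kappa>_def E_def \<Theta>_def by (intro nn_integral_mono nn_integral_exp_update_le[OF \<mu> a])
  also have "\<dots> = ennreal (\<integral>x. exp (a * norm x) powr \<kappa> * E \<partial>\<mu>) * \<Theta>"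
    using int_powr by (simp add: nn_integral_multc nn_integral_eq_integral E_def)
  also have "\<dots> \<le> ennreal (L powr \<kappa> * L powr (\<delta> * M)) * \<Theta>"
    using le_powr E_le by (intro mult_right_mono ennreal_leI) (simp_all add: E_def mult_mono)
  also have "L powr \<kappa> * L powr (\<delta> * M) = L powr (exp (- \<omega>) + 2 * \<delta> * M)"
    by (simp add: \<kappa>_def algebra_simps flip: powr_add)
  finally show ?thesis
    unfolding L_def \<Theta>_def .
qed

lemma
  assumes \<mu>: "P1 \<mu>" and a: "0 < a" and fin: "exp_moment a \<mu> < \<infinity>"
    and fin_\<theta>: "(\<integral>\<^sup>+z. ennreal (exp (a * \<delta> * D1 f z)) \<partial>\<theta>) < \<infinity>"
  shows exp_moment_step_finite: "exp_moment a (step \<mu>) < \<infinity>"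
    and P1_step: "P1 (step \<mu>)"
proof -
  show fin_step: "exp_moment a (step \<mu>) < \<infinity>"
    using exp_moment_step_le[OF \<mu> less_imp_le[OF a] fin] fin_\<theta>
    by (simp add: le_less_trans ennreal_mult_less_top)
  show "P1 (step \<mu>)"
    by (rule P1_if_exp_moment_finite[OF prob_space_step[OF \<mu>] sets_step a fin_step])
qed

lemma iterates_exp_moment_finite:
  assumes "P1 \<mu>" "0 < a" "exp_moment a \<mu> < \<infinity>"
    and "(\<integral>\<^sup>+z. ennreal (exp (a * \<delta> * D1 f z)) \<partial>\<theta>) < \<infinity>"
  shows "P1 ((step ^^ n) \<mu>) \<and> exp_moment a ((step ^^ n) \<mu>) < \<infinity>"
  by (induction n) (use assms exp_moment_step_finite P1_step in auto)

lemma exp_moment_iterates_le: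
  assumes P1: "\<And>n. P1 ((step ^^ n) \<mu>)" and fin: "\<And>n. exp_moment a ((step ^^ n) \<mu>) < \<infinity>"
    and a: "0 \<le> a" and b: "0 \<le> b"
    and \<theta>_le: "(\<integral>\<^sup>+z. ennreal (exp (a * \<delta> * D1 f z)) \<partial>\<theta>) \<le> ennreal (exp b)"
    and \<kappa>: "exp (- \<omega>) + 2 * \<delta> * M < 1"
  shows "exp_moment a ((step ^^ n) \<mu>)
    \<le> exp_moment a \<mu> * ennreal (exp (b / (1 - (exp (- \<omega>) + 2 * \<delta> * M))))"
proof -
  define l where "l n = (\<integral>x. exp (a * norm x) \<partial>(step ^^ n) \<mu>)" for n
  have sets: "sets ((step ^^ n) \<mu>) = sets borel" for n using P1[of n] by (simp add: P1_def)
  have moment: "exp_moment a ((step ^^ n) \<mu>) = ennreal (l n)" for n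
    unfolding l_def by (rule exp_moment_eq_integral[OF sets fin])
  have l_nonneg: "0 \<le> l n" for n unfolding l_def by (rule integral_nonneg_AE) simp
  have "ennreal (l (Suc n))
      \<le> ennreal (l n powr (exp (- \<omega>) + 2 * \<delta> * M)) * (\<integral>\<^sup>+z. ennreal (exp (a * \<delta> * D1 f z)) \<partial>\<theta>)"
    for n unfolding moment[symmetric] using exp_moment_step_le[OF P1 a fin, of n] by (simp add: l_def)
  also have "\<dots> n \<le> ennreal (l n powr (exp (- \<omega>) + 2 * \<delta> * M) * exp b)" for n
    using \<theta>_le by (simp add: ennreal_mult mult_left_mono)
  finally have rec: "l (Suc n) \<le> l n powr (exp (- \<omega>) + 2 * \<delta> * M) * exp b" for n
    by (simp add: ennreal_le_iff)
  have "1 \<le> l 0"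
    unfolding l_def using one_le_integral_exp_norm[of \<mu> a] P1[of 0] fin[of 0] a by (simp add: P1_def)
  moreover have "0 \<le> exp (- \<omega>) + 2 * \<delta> * M"
    using M_nonneg \<delta>_nonneg by (simp add: add_nonneg_nonneg)
  ultimately have "l n \<le> l 0 * exp (b / (1 - (exp (- \<omega>) + 2 * \<delta> * M)))"
    using powr_recurrence_bound[of l, OF rec l_nonneg] \<kappa> b by simp
  then show ?thesis
    using moment[of n] moment[of 0] l_nonneg[of 0] by (simp add: ennreal_leI flip: ennreal_mult)
qed

end

lemma contraction_constants:
  fixes M \<delta> \<omega> :: real
  assumes M: "1 < M" and \<delta>: "0 < \<delta>" "\<delta> < (1 - exp (- \<omega>)) / (2 * M)"
  shows "0 < exp (- \<omega>) + 2 * \<delta> * M" "exp (- \<omega>) + 2 * \<delta> * M < 1"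
    and "\<delta> \<le> 1" "exp (- \<omega>) + \<delta> * M \<le> 1"
proof -
  have "\<delta> * (2 * M) < 1 - exp (- \<omega>)" using \<delta>(2) M by (simp add: pos_less_divide_eq)
  moreover have "\<delta> \<le> \<delta> * M" using \<delta>(1) M by simp
  moreover have "0 < 2 * \<delta> * M" using \<delta>(1) M by simp
  ultimately show "0 < exp (- \<omega>) + 2 * \<delta> * M" "exp (- \<omega>) + 2 * \<delta> * M < 1"
    "\<delta> \<le> 1" "exp (- \<omega>) + \<delta> * M \<le> 1"
    using exp_gt_zero[of "- \<omega>"] by linarith+
qed

theorem lemma4p11:
  fixes A :: "real^'n^'n" and \<delta> \<omega> M \<alpha> \<alpha>0 c2 :: real
    and \<theta> :: "(real^'m) measure" and \<mu>0 :: "(real^'n) measure"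
    and f :: "real^'n \<Rightarrow> (real^'n) measure \<Rightarrow> real^'m \<Rightarrow> real^'n"
  assumes theta: "prob_space \<theta>" "sets \<theta> = sets borel"
    and f_meas: "\<And>\<mu>. P1 \<mu> \<Longrightarrow> (\<lambda>(x, z). f x \<mu> z) \<in> borel_measurable (borel \<Otimes>\<^sub>M borel)"
    and mu0: "P1 \<mu>0"
    and A3: "\<omega> > 0" "onorm ((*v) A) \<le> exp (- \<omega>)"
    and A6i: "M > 1" "AE z in \<theta>. Dlip f z \<le> ereal M"
    and A6ii: "\<alpha> > 0" "(\<integral>\<^sup>+ x. ennreal (exp (\<alpha> * norm x)) \<partial>\<mu>0) < \<infinity>"
      "(\<integral>\<^sup>+ z. ennreal (exp (\<alpha> * D1 f z)) \<partial>\<theta>) < \<infinity>"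
    and delta: "\<delta> > 0" "\<delta> < (1 - exp (- \<omega>)) / (2 * M)"
    and alpha0: "0 < \<alpha>0" "\<alpha>0 \<le> \<alpha>"
    and c2: "0 < c2"
    and hc2: "\<And>\<alpha>1. 0 \<le> \<alpha>1 \<Longrightarrow> \<alpha>1 \<le> \<alpha>0 \<Longrightarrow>
       (\<integral>\<^sup>+ z. ennreal (exp (\<alpha>1 * D1 f z)) \<partial>\<theta>) \<le> ennreal (exp (c2 * \<alpha>1))"
  shows "0 < exp (- \<omega>) + 2 * \<delta> * M \<and> exp (- \<omega>) + 2 * \<delta> * M < 1 \<and>
    (\<forall>\<alpha>1. 0 \<le> \<alpha>1 \<and> \<alpha>1 \<le> \<alpha>0 \<longrightarrow>
      (SUP n. \<integral>\<^sup>+ x. ennreal (exp (\<alpha>1 * norm x)) \<partial>((Psi A \<delta> f \<theta> ^^ n) \<mu>0))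
        \<le> (\<integral>\<^sup>+ x. ennreal (exp (\<alpha>1 * norm x)) \<partial>\<mu>0)
           * ennreal (exp (c2 * \<alpha>1 / (1 - (exp (- \<omega>) + 2 * \<delta> * M)))))"
proof -
  define \<kappa> where "\<kappa> = exp (- \<omega>) + 2 * \<delta> * M"
  have \<kappa>_pos: "0 < \<kappa>" and \<kappa>_lt_1: "\<kappa> < 1" and \<delta>_le_1: "\<delta> \<le> 1"
    using contraction_constants[OF A6i(1) delta] unfolding \<kappa>_def by simp_all
  have "nonlinear_evolution A \<delta> \<omega> M \<theta> f"
    using A6i(1) delta(1) contraction_constants(4)[OF A6i(1) delta]
    by (intro nonlinear_evolution.intro[OF theta f_meas A3(2) A6i(2)]) simp_all
  then interpret nonlinear_evolution A \<delta> \<omega> M \<theta> f .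
  have \<theta>_le: "(\<integral>\<^sup>+z. ennreal (exp (a * \<delta> * D1 f z)) \<partial>\<theta>) \<le> ennreal (exp (c2 * (a * \<delta>)))"
    if "0 \<le> a" "a \<le> \<alpha>0" for a
    using that delta(1) mult_left_le[OF \<delta>_le_1 that(1)] by (intro hc2) auto
  have "exp_moment \<alpha>0 \<mu>0 < \<infinity>"
    using exp_moment_mono[OF alpha0(2), of \<mu>0] A6ii(2) unfolding exp_moment_def by simp
  moreover have "(\<integral>\<^sup>+z. ennreal (exp (\<alpha>0 * \<delta> * D1 f z)) \<partial>\<theta>) < \<infinity>"
    using \<theta>_le[of \<alpha>0] alpha0(1) by (simp add: le_less_trans)
  ultimately have "P1 ((step ^^ n) \<mu>0) \<and> exp_moment \<alpha>0 ((step ^^ n) \<mu>0) < \<infinity>" for n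
    by (rule iterates_exp_moment_finite[OF mu0 alpha0(1)])
  then have iterates: "P1 ((step ^^ n) \<mu>0)" "exp_moment a ((step ^^ n) \<mu>0) < \<infinity>"
    if "a \<le> \<alpha>0" for a n
    using exp_moment_mono[OF that] le_less_trans by blast+
  have "(SUP n. exp_moment a ((step ^^ n) \<mu>0)) \<le> exp_moment a \<mu>0 * ennreal (exp (c2 * a / (1 - \<kappa>)))"
    if a: "0 \<le> a" "a \<le> \<alpha>0" for a
  proof (rule SUP_least)
    fix n
    have "exp_moment a ((step ^^ n) \<mu>0) \<le> exp_moment a \<mu>0 * ennreal (exp (c2 * (a * \<delta>) / (1 - \<kappa>)))"
      using exp_moment_iterates_le[OF iterates[OF a(2)] a(1) _ \<theta>_le[OF a]] c2 a(1) delta(1) \<kappa>_lt_1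
      unfolding \<kappa>_def by simp
    also have "\<dots> \<le> exp_moment a \<mu>0 * ennreal (exp (c2 * a / (1 - \<kappa>)))"
      using c2 a(1) \<kappa>_lt_1 mult_left_le[OF \<delta>_le_1 a(1)]
      by (intro mult_left_mono ennreal_leI) (simp_all add: divide_right_mono)
    finally show "exp_moment a ((step ^^ n) \<mu>0) \<le> exp_moment a \<mu>0 * ennreal (exp (c2 * a / (1 - \<kappa>)))" .
  qed
  then show ?thesis
    unfolding \<kappa>_def[symmetric] exp_moment_def[symmetric] using \<kappa>_pos \<kappa>_lt_1 by blast
qed

end
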